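(* Every punctually computable function $f:[0,1]\to\mathbb{R}$ is uniformly punctually computable.
   Context: A sequence $(r_i)_{i\in\mathbb{N}}$ of rationals is a fast Cauchy sequence if $|r_i-r_{i+1}|<2^{-i}$ for all $i$. Names of points $x\in[0,1]$ are fast Cauchy sequences converging to $x$ consisting of dyadic rationals in $[0,1]$ (with the $i$-th term of the form $m/2^{i}$), so that the space of names is a compact, primitively recursively branching, totally disconnected space. A primitive recursive functional is one given by a primitive recursive scheme (built from basic functions by composition and primitive recursion) with an additional oracle function symbol interpreted as the name. A function $f:[0,1]\to\mathbb{R}$ is punctually computable if there is a primitive recursive functional $\Phi$ such that for every $x\in[0,1]$ and every name $\chi$ of $x$, $(\Phi^\chi(n))_{n\in\mathbb{N}}$ is a fast Cauchy sequence of rationals converging to $f(x)$. A function $f:[0,1]\to\mathbb{R}$ is uniformly punctually computable if there is a primitive recursive function which on input $i$ outputs (a code of) a polynomial $p_i$ with rational coefficients such that $\sup_{x\in[0,1]}|f(x)-p_i(x)|<2^{-i}$. *)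

theory Defs
  imports Complex_Main "HOL-Library.Nat_Bijection" "HOL-Computational_Algebra.Polynomial"
begin

text \<open>Primitive recursive schemes over nat with one additional unary oracle symbol.
  Arguments are passed as a list; missing arguments read as 0.\<close>

datatype prscheme =
    PZero
  | PSucc
  | PProj nat
  | PComp prscheme "prscheme list"
  | PRec prscheme prscheme
  | POracle

definition arg :: "nat \<Rightarrow> nat list \<Rightarrow> nat" where
  "arg i xs = (if i < length xs then xs ! i else 0)"

primrec peval :: "prscheme \<Rightarrow> (nat \<Rightarrow> nat) \<Rightarrow> nat list \<Rightarrow> nat" where
  "peval PZero \<chi> xs = 0"
| "peval PSucc \<chi> xs = Suc (arg 0 xs)"
| "peval (PProj i) \<chi> xs = arg i xs"
| "peval (PComp f gs) \<chi> xs = peval f \<chi> (map (\<lambda>g. peval g \<chi> xs) gs)"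
| "peval (PRec g h) \<chi> xs =
     rec_nat (peval g \<chi> (drop 1 xs)) (\<lambda>n r. peval h \<chi> (n # r # drop 1 xs)) (arg 0 xs)"
| "peval POracle \<chi> xs = \<chi> (arg 0 xs)"

primrec oracle_free :: "prscheme \<Rightarrow> bool" where
  "oracle_free PZero = True"
| "oracle_free PSucc = True"
| "oracle_free (PProj i) = True"
| "oracle_free (PComp f gs) = (oracle_free f \<and> list_all oracle_free gs)"
| "oracle_free (PRec g h) = (oracle_free g \<and> oracle_free h)"
| "oracle_free POracle = False"

definition decode_rat :: "nat \<Rightarrow> rat" where
  "decode_rat c = (case prod_decode c of (a, b) \<Rightarrow> Fract (int_decode a) (int b + 1))"

definition decode_poly :: "nat \<Rightarrow> real poly" where
  "decode_poly c = Poly (map (\<lambda>k. real_of_rat (decode_rat k)) (list_decode c))"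

definition fast_cauchy :: "(nat \<Rightarrow> rat) \<Rightarrow> bool" where
  "fast_cauchy r \<longleftrightarrow> (\<forall>i. \<bar>r i - r (Suc i)\<bar> < 1 / 2 ^ i)"

text \<open>A name of x: the i-th term is the dyadic rational (\<chi> i)/2^i in [0,1];
  the oracle returns the numerator \<chi> i.\<close>

definition is_name :: "(nat \<Rightarrow> nat) \<Rightarrow> real \<Rightarrow> bool" where
  "is_name \<chi> x \<longleftrightarrow> (\<forall>i. \<chi> i \<le> 2 ^ i)
     \<and> fast_cauchy (\<lambda>i. of_nat (\<chi> i) / 2 ^ i)
     \<and> (\<lambda>i. real (\<chi> i) / 2 ^ i) \<longlonglongrightarrow> x"

definition punctually_computable :: "(real \<Rightarrow> real) \<Rightarrow> bool" where
  "punctually_computable f \<longleftrightarrow> (\<exists>\<Phi>. \<forall>x\<in>{0..1}. \<forall>\<chi>. is_name \<chi> x \<longrightarrow>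
      fast_cauchy (\<lambda>n. decode_rat (peval \<Phi> \<chi> [n]))
      \<and> (\<lambda>n. real_of_rat (decode_rat (peval \<Phi> \<chi> [n]))) \<longlonglongrightarrow> f x)"

definition uniformly_punctually_computable :: "(real \<Rightarrow> real) \<Rightarrow> bool" where
  "uniformly_punctually_computable f \<longleftrightarrow> (\<exists>P. oracle_free P \<and> (\<forall>i.
      bdd_above ((\<lambda>x. \<bar>f x - poly (decode_poly (peval P (\<lambda>_. 0) [i])) x\<bar>) ` {0..1})
      \<and> (SUP x\<in>{0..1}. \<bar>f x - poly (decode_poly (peval P (\<lambda>_. 0) [i])) x\<bar>) < 1 / 2 ^ i))"

end

theory Submission
  imports Defs "HOL-Analysis.Analysis"
begin

text \<open>A primitive recursive functional reads only finitely much of its oracle, and since the i-th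
  entry of a name is at most 2^i, a primitive recursive bound B on both its values and its use can
  be built by induction on the scheme. Floor (or ceiling) names of points that round alike at
  precision B n agree on this use, which gives a primitive recursive modulus of uniform continuity:
  |a - b| \<le> 2^-(B n) implies |f a - f b| \<le> 8 \<cdot> 2^-n. The Bernstein polynomial of degree 4^(B n)
  built from dyadic roundings of the values computed at the grid points k / 4^(B n) then
  approximates f within 19 \<cdot> 2^-n, and its monomial coefficients are primitive recursive in n.\<close>

section \<open>Primitive recursive functions\<close>

definition prim_rec :: "(nat list \<Rightarrow> nat) \<Rightarrow> bool" where
  "prim_rec F \<longleftrightarrow> (\<exists>S. oracle_free S \<and> (\<forall>\<rho> xs. peval S \<rho> xs = F xs))"

named_theorems prim_rec_intros

lemma arg_Cons_0 [simp]: "arg 0 (a # xs) = a"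
  by (simp add: arg_def)

lemma arg_Cons_Suc [simp]: "arg (Suc i) (a # xs) = arg i xs"
  by (simp add: arg_def)

lemma arg_Nil [simp]: "arg i [] = 0"
  by (simp add: arg_def)

lemma arg_drop_Suc_0 [simp]: "arg i (drop (Suc 0) xs) = arg (Suc i) xs"
  by (cases xs) auto

lemma arg_append: "arg i (xs @ ys) = (if i < length xs then xs ! i else arg (i - length xs) ys)"
  by (auto simp: arg_def nth_append)

lemma arg_le_bound: "\<forall>x\<in>set xs. x \<le> s \<Longrightarrow> arg i xs \<le> s"
  by (auto simp: arg_def)

lemma prim_rec_zero: "prim_rec (\<lambda>xs. 0)"
  unfolding prim_rec_def by (rule exI[of _ PZero]) simp

lemma prim_rec_succ: "prim_rec (\<lambda>xs. Suc (arg 0 xs))"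
  unfolding prim_rec_def by (rule exI[of _ PSucc]) simp

lemma prim_rec_arg [prim_rec_intros]: "prim_rec (\<lambda>xs. arg i xs)"
  unfolding prim_rec_def by (rule exI[of _ "PProj i"]) simp

lemma prim_rec_comp_list:
  assumes "prim_rec F" "\<forall>G\<in>set Gs. prim_rec G"
  shows "prim_rec (\<lambda>xs. F (map (\<lambda>G. G xs) Gs))"
proof -
  from assms(2) have "\<exists>Ss. list_all oracle_free Ss \<and>
      (\<forall>\<rho> xs. map (\<lambda>S. peval S \<rho> xs) Ss = map (\<lambda>G. G xs) Gs)"
  proof (induction Gs)
    case Nil
    show ?case by (intro exI[of _ "[]"]) simp
  next
    case (Cons G Gs)
    then obtain Ss where "list_all oracle_free Ss"
      "\<forall>\<rho> xs. map (\<lambda>S. peval S \<rho> xs) Ss = map (\<lambda>G. G xs) Gs" by auto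
    moreover from Cons.prems obtain S where "oracle_free S" "\<forall>\<rho> xs. peval S \<rho> xs = G xs"
      unfolding prim_rec_def by auto
    ultimately show ?case by (intro exI[of _ "S # Ss"]) simp
  qed
  then obtain Ss where "list_all oracle_free Ss"
    "\<forall>\<rho> xs. map (\<lambda>S. peval S \<rho> xs) Ss = map (\<lambda>G. G xs) Gs" by auto
  moreover from assms(1) obtain SF where "oracle_free SF" "\<forall>\<rho> xs. peval SF \<rho> xs = F xs"
    unfolding prim_rec_def by auto
  ultimately show ?thesis
    unfolding prim_rec_def by (intro exI[of _ "PComp SF Ss"]) simp
qed

lemma prim_rec_comp1:
  assumes "prim_rec (\<lambda>xs. f (arg 0 xs))" "prim_rec A"
  shows "prim_rec (\<lambda>xs. f (A xs))"
  using prim_rec_comp_list[OF assms(1), of "[A]"] assms(2) by simp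

lemma prim_rec_comp2:
  assumes "prim_rec (\<lambda>xs. f (arg 0 xs) (arg 1 xs))" "prim_rec A" "prim_rec B"
  shows "prim_rec (\<lambda>xs. f (A xs) (B xs))"
  using prim_rec_comp_list[OF assms(1), of "[A, B]"] assms(2,3) by simp

lemma prim_rec_comp3:
  assumes "prim_rec (\<lambda>xs. f (arg 0 xs) (arg 1 xs) (arg 2 xs))" "prim_rec A" "prim_rec B" "prim_rec C"
  shows "prim_rec (\<lambda>xs. f (A xs) (B xs) (C xs))"
  using prim_rec_comp_list[OF assms(1), of "[A, B, C]"] assms(2-4) by (simp add: numeral_2_eq_2)

lemma prim_rec_const [prim_rec_intros]: "prim_rec (\<lambda>xs. c)"
  by (induction c) (use prim_rec_zero prim_rec_comp1[OF prim_rec_succ] in auto)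

lemma prim_rec_Suc [prim_rec_intros]: "prim_rec A \<Longrightarrow> prim_rec (\<lambda>xs. Suc (A xs))"
  by (rule prim_rec_comp1[OF prim_rec_succ])

lemma prim_rec_recursion:
  assumes "\<And>p q. F 0 p q = g p q" and "\<And>m p q. F (Suc m) p q = h m (F m p q) p q"
    and "prim_rec (\<lambda>ys. g (arg 0 ys) (arg 1 ys))"
    and "prim_rec (\<lambda>ys. h (arg 0 ys) (arg 1 ys) (arg 2 ys) (arg 3 ys))"
    and "prim_rec N" "prim_rec P" "prim_rec Q"
  shows "prim_rec (\<lambda>xs. F (N xs) (P xs) (Q xs))"
proof -
  have F: "F m p q = rec_nat (g p q) (\<lambda>k r. h k r p q) m" for m p q
    by (induction m) (simp_all add: assms(1,2))
  from assms(3,4) obtain G H where "oracle_free G" "\<forall>\<rho> ys. peval G \<rho> ys = g (arg 0 ys) (arg 1 ys)"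
    "oracle_free H" "\<forall>\<rho> ys. peval H \<rho> ys = h (arg 0 ys) (arg 1 ys) (arg 2 ys) (arg 3 ys)"
    unfolding prim_rec_def by blast
  then have "prim_rec (\<lambda>xs. F (arg 0 xs) (arg 1 xs) (arg 2 xs))"
    unfolding prim_rec_def F by (intro exI[of _ "PRec G H"]) (simp add: numeral_2_eq_2 numeral_3_eq_3)
  from prim_rec_comp3[OF this assms(5-7)] show ?thesis .
qed

lemma prim_rec_add [prim_rec_intros]: "prim_rec A \<Longrightarrow> prim_rec B \<Longrightarrow> prim_rec (\<lambda>xs. A xs + B xs)"
  by (rule prim_rec_recursion[where F = "\<lambda>m p q. m + p" and Q = "\<lambda>xs. 0"
        and g = "\<lambda>p q. p" and h = "\<lambda>k r p q. Suc r"])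
    (intro prim_rec_intros | simp)+

lemma prim_rec_pred: "prim_rec (\<lambda>xs. arg 0 xs - 1)"
  by (rule prim_rec_recursion[where F = "\<lambda>m p q. m - 1" and P = "\<lambda>xs. 0" and Q = "\<lambda>xs. 0"
        and g = "\<lambda>p q. 0" and h = "\<lambda>k r p q. k"])
    (intro prim_rec_intros | simp)+

lemma prim_rec_minus [prim_rec_intros]: "prim_rec A \<Longrightarrow> prim_rec B \<Longrightarrow> prim_rec (\<lambda>xs. A xs - B xs)"
  by (rule prim_rec_recursion[where F = "\<lambda>m p q. p - m" and Q = "\<lambda>xs. 0"
        and g = "\<lambda>p q. p" and h = "\<lambda>k r p q. r - 1"])
    (intro prim_rec_intros prim_rec_comp1[OF prim_rec_pred] | simp)+

lemma prim_rec_mult [prim_rec_intros]: "prim_rec A \<Longrightarrow> prim_rec B \<Longrightarrow> prim_rec (\<lambda>xs. A xs * B xs)"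
  by (rule prim_rec_recursion[where F = "\<lambda>m p q. m * p" and Q = "\<lambda>xs. 0"
        and g = "\<lambda>p q. 0" and h = "\<lambda>k r p q. p + r"])
    (intro prim_rec_intros | simp)+

lemma prim_rec_power [prim_rec_intros]: "prim_rec A \<Longrightarrow> prim_rec B \<Longrightarrow> prim_rec (\<lambda>xs. A xs ^ B xs)"
  by (rule prim_rec_recursion[where F = "\<lambda>m p q. p ^ m" and Q = "\<lambda>xs. 0"
        and g = "\<lambda>p q. 1" and h = "\<lambda>k r p q. p * r"])
    (intro prim_rec_intros | simp)+

lemma prim_rec_fact [prim_rec_intros]: "prim_rec A \<Longrightarrow> prim_rec (\<lambda>xs. fact (A xs))"
  by (rule prim_rec_recursion[where F = "\<lambda>m p q. fact m" and P = "\<lambda>xs. 0" and Q = "\<lambda>xs. 0"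
        and g = "\<lambda>p q. 1" and h = "\<lambda>k r p q. Suc k * r"])
    (intro prim_rec_intros | simp)+

lemma prim_rec_sum:
  assumes "prim_rec (\<lambda>ys. t (arg 0 ys) (arg 1 ys) (arg 2 ys))" "prim_rec N" "prim_rec P" "prim_rec Q"
  shows "prim_rec (\<lambda>xs. \<Sum>k<N xs. t k (P xs) (Q xs))"
  by (rule prim_rec_recursion[where F = "\<lambda>m p q. \<Sum>k<m. t k p q"
        and g = "\<lambda>p q. 0"
        and h = "\<lambda>k r p q. r + t k p q"])
    (intro prim_rec_intros prim_rec_comp3[OF assms(1)] assms(2-4) | simp)+

lemma prim_rec_if_le [prim_rec_intros]:
  assumes "prim_rec A" "prim_rec B" "prim_rec C" "prim_rec D"
  shows "prim_rec (\<lambda>xs. if A xs \<le> B xs then C xs else D xs)"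
proof -
  have "(if A xs \<le> B xs then C xs else D xs) =
      C xs * (1 - (A xs - B xs)) + D xs * (1 - (1 - (A xs - B xs)))" for xs
    by auto
  then show ?thesis by (simp only:) (intro prim_rec_intros assms)
qed

lemma div_eq_card_multiples:
  fixes x y :: nat
  assumes "0 < y"
  shows "x div y = (\<Sum>t<x. if Suc t * y \<le> x then 1 else 0)"
proof -
  have "Suc t * y \<le> x \<longleftrightarrow> t < x div y" for t
    using assms less_eq_div_iff_mult_less_eq[of y "Suc t" x] by auto
  then have "(\<Sum>t<x. if Suc t * y \<le> x then 1 else 0) = (\<Sum>t<x. if t < x div y then 1 else (0::nat))"
    by simp
  also have "\<dots> = card ({..<x} \<inter> {t. t < x div y})"
    by (simp add: sum.If_cases)
  also have "{..<x} \<inter> {t. t < x div y} = {..<x div y}"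
    using div_le_dividend[of x y] by (auto intro: order.strict_trans2)
  finally show ?thesis by simp
qed

lemma prim_rec_div [prim_rec_intros]: "prim_rec A \<Longrightarrow> prim_rec B \<Longrightarrow> prim_rec (\<lambda>xs. A xs div B xs)"
proof -
  have "prim_rec (\<lambda>xs. \<Sum>t<arg 0 xs. if Suc t * arg 1 xs \<le> arg 0 xs then 1 else 0)"
    by (rule prim_rec_sum[where t = "\<lambda>t x y. if Suc t * y \<le> x then 1 else 0"])
      (intro prim_rec_intros)+
  then have "prim_rec (\<lambda>xs. if arg 1 xs \<le> 0 then 0
      else \<Sum>t<arg 0 xs. if Suc t * arg 1 xs \<le> arg 0 xs then 1 else 0)"
    by (intro prim_rec_intros)
  also have "(\<lambda>xs. if arg 1 xs \<le> 0 then 0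
      else \<Sum>t<arg 0 xs. if Suc t * arg 1 xs \<le> arg 0 xs then 1 else 0) = (\<lambda>xs. arg 0 xs div arg 1 xs)"
    using div_eq_card_multiples by fastforce
  finally show "prim_rec A \<Longrightarrow> prim_rec B \<Longrightarrow> prim_rec (\<lambda>xs. A xs div B xs)"
    by (rule prim_rec_comp2)
qed

lemma prim_rec_if_even [prim_rec_intros]:
  assumes "prim_rec A" "prim_rec C" "prim_rec D"
  shows "prim_rec (\<lambda>xs. if even (A xs) then C xs else D xs)"
proof -
  have "even a \<longleftrightarrow> a - 2 * (a div 2) \<le> 0" for a :: nat
    by (auto simp: minus_mod_eq_mult_div[symmetric] even_iff_mod_2_eq_zero)
  then show ?thesis by (simp only:) (intro prim_rec_intros assms)
qed

lemma prim_rec_choose [prim_rec_intros]: "prim_rec A \<Longrightarrow> prim_rec B \<Longrightarrow> prim_rec (\<lambda>xs. A xs choose B xs)"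
proof -
  have "a choose b = (if b \<le> a then fact a div (fact b * fact (a - b)) else 0)" for a b :: nat
    using binomial_fact'[of b a] by auto
  then show "prim_rec A \<Longrightarrow> prim_rec B \<Longrightarrow> prim_rec (\<lambda>xs. A xs choose B xs)"
    by (simp only:) (intro prim_rec_intros)
qed

lemma prim_rec_triangle [prim_rec_intros]: "prim_rec A \<Longrightarrow> prim_rec (\<lambda>xs. triangle (A xs))"
  unfolding triangle_def by (intro prim_rec_intros)

lemma prim_rec_prod_encode [prim_rec_intros]:
  "prim_rec A \<Longrightarrow> prim_rec B \<Longrightarrow> prim_rec (\<lambda>xs. prod_encode (A xs, B xs))"
  unfolding prod_encode_def by simp (intro prim_rec_intros)

definition pairing_diagonal :: "nat \<Rightarrow> nat" where
  "pairing_diagonal c = rec_nat 0 (\<lambda>k r. if triangle (Suc r) \<le> Suc k then Suc r else r) c"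

lemma pairing_diagonal_bounds:
  "triangle (pairing_diagonal c) \<le> c \<and> c < triangle (Suc (pairing_diagonal c))"
  by (induction c) (auto simp: pairing_diagonal_def)

lemma prod_decode_pairing_diagonal:
  "prod_decode c = (c - triangle (pairing_diagonal c), pairing_diagonal c - (c - triangle (pairing_diagonal c)))"
proof -
  let ?d = "pairing_diagonal c"
  have "prod_encode (c - triangle ?d, ?d - (c - triangle ?d)) = c"
    using pairing_diagonal_bounds[of c] by (simp add: prod_encode_def)
  then show ?thesis by (metis prod_encode_inverse)
qed

lemma prim_rec_pairing_diagonal: "prim_rec A \<Longrightarrow> prim_rec (\<lambda>xs. pairing_diagonal (A xs))"
  by (rule prim_rec_recursion[where F = "\<lambda>m p q. pairing_diagonal m" and P = "\<lambda>xs. 0" and Q = "\<lambda>xs. 0"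
        and g = "\<lambda>p q. 0" and h = "\<lambda>k r p q. if triangle (Suc r) \<le> Suc k then Suc r else r"])
    (intro prim_rec_intros | simp add: pairing_diagonal_def)+

lemma prim_rec_prod_decode [prim_rec_intros]:
  "prim_rec A \<Longrightarrow> prim_rec (\<lambda>xs. fst (prod_decode (A xs)))"
  "prim_rec A \<Longrightarrow> prim_rec (\<lambda>xs. snd (prod_decode (A xs)))"
  unfolding prod_decode_pairing_diagonal by (simp_all, intro prim_rec_intros prim_rec_pairing_diagonal)+

section \<open>Replacing the oracle by a primitive recursive function\<close>

primrec arity :: "prscheme \<Rightarrow> nat" where
  "arity PZero = 0"
| "arity PSucc = 1"
| "arity (PProj i) = Suc i"
| "arity (PComp f gs) = foldr max (map arity gs) 0"
| "arity (PRec g h) = max (Suc (arity g)) (arity h - 1)"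
| "arity POracle = 1"

lemma foldr_max_ge: "x \<in> set xs \<Longrightarrow> x \<le> foldr max xs (0::nat)"
  by (induction xs) auto

lemma peval_cong_arity:
  "(\<forall>i<n. arg i xs = arg i ys) \<Longrightarrow> arity S \<le> n \<Longrightarrow> peval S \<rho> xs = peval S \<rho> ys"
proof (induction S arbitrary: n xs ys)
  case (PComp f gs)
  have "peval g \<rho> xs = peval g \<rho> ys" if "g \<in> set gs" for g
    using PComp.IH(2)[OF that] PComp.prems foldr_max_ge[of "arity g" "map arity gs"] that by auto
  then have "map (\<lambda>g. peval g \<rho> xs) gs = map (\<lambda>g. peval g \<rho> ys) gs"
    by (rule map_cong[OF refl])
  then show ?case by (simp only: peval.simps)
next
  case (PRec g h)
  have "peval g \<rho> (drop 1 xs) = peval g \<rho> (drop 1 ys)"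
    by (rule PRec.IH(1)[of "n - 1"]) (use PRec.prems in auto)
  moreover have "peval h \<rho> (k # r # drop 1 xs) = peval h \<rho> (k # r # drop 1 ys)" for k r
  proof (rule PRec.IH(2)[of "Suc n"])
    show "\<forall>i<Suc n. arg i (k # r # drop 1 xs) = arg i (k # r # drop 1 ys)"
    proof (intro allI impI)
      fix i assume "i < Suc n"
      with PRec.prems(1) show "arg i (k # r # drop 1 xs) = arg i (k # r # drop 1 ys)"
        by (cases i; cases "i - 1") auto
    qed
  qed (use PRec.prems in auto)
  moreover have "arg 0 xs = arg 0 ys" using PRec.prems by auto
  ultimately show ?case by simp
qed auto

text \<open>Every oracle call becomes a call of C whose first argument is the original query and whose
  second is read from position pos; pos is kept above the arity of every subscheme, so this
  parameter travels unchanged through compositions and recursions.\<close>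

primrec subst_oracle :: "prscheme \<Rightarrow> prscheme \<Rightarrow> nat \<Rightarrow> prscheme" where
  "subst_oracle PZero C pos = PZero"
| "subst_oracle PSucc C pos = PSucc"
| "subst_oracle (PProj i) C pos = PProj i"
| "subst_oracle (PComp f gs) C pos = PComp (subst_oracle f C (max (length gs) (arity f)))
      (map (\<lambda>g. subst_oracle g C pos) gs @ replicate (max (length gs) (arity f) - length gs) PZero
        @ [PProj pos])"
| "subst_oracle (PRec g h) C pos = PRec (subst_oracle g C (pos - 1)) (subst_oracle h C (Suc pos))"
| "subst_oracle POracle C pos = PComp C [PProj pos, PProj 0]"

lemma oracle_free_subst_oracle: "oracle_free C \<Longrightarrow> oracle_free (subst_oracle S C pos)"
  by (induction S arbitrary: pos) (auto simp: list_all_iff)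

lemma peval_subst_oracle:
  assumes C: "\<And>\<rho> ys. peval C \<rho> ys = c (arg 0 ys) (arg 1 ys)"
  shows "arity S \<le> pos \<Longrightarrow> peval (subst_oracle S C pos) \<rho> xs = peval S (c (arg pos xs)) xs"
proof (induction S arbitrary: pos xs)
  case (PComp f gs)
  let ?q = "max (length gs) (arity f)"
  let ?p = "arg pos xs"
  let ?L = "map (\<lambda>g. peval g (c ?p) xs) gs"
  let ?L' = "?L @ replicate (?q - length gs) 0 @ [?p]"
  have "peval (subst_oracle g C pos) \<rho> xs = peval g (c ?p) xs" if "g \<in> set gs" for g
    using PComp.IH(2)[OF that] PComp.prems foldr_max_ge[of "arity g" "map arity gs"] that by auto
  then have args: "map (\<lambda>S. peval S \<rho> xs) (map (\<lambda>g. subst_oracle g C pos) gs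
      @ replicate (?q - length gs) PZero @ [PProj pos]) = ?L'"
    by (simp add: map_replicate_const)
  have "arg ?q ?L' = ?p"
    by (simp add: arg_append)
  moreover have "peval (subst_oracle f C ?q) \<rho> ?L' = peval f (c (arg ?q ?L')) ?L'"
    by (rule PComp.IH(1)) simp
  ultimately have "peval (subst_oracle f C ?q) \<rho> ?L' = peval f (c ?p) ?L'"
    by simp
  also have "\<dots> = peval f (c ?p) ?L"
    by (rule peval_cong_arity[of ?q]) (auto simp: arg_def nth_append)
  finally show ?case by (simp only: subst_oracle.simps peval.simps args)
next
  case (PRec g h)
  then obtain p where p: "pos = Suc p" by (cases pos) auto
  have "peval (subst_oracle g C (pos - 1)) \<rho> (drop 1 xs) = peval g (c (arg pos xs)) (drop 1 xs)"
    using PRec.IH(1)[of "pos - 1" "drop 1 xs"] PRec.prems p by simp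
  moreover have "arity h \<le> Suc pos"
    using PRec.prems by simp linarith
  then have "peval (subst_oracle h C (Suc pos)) \<rho> (k # r # drop 1 xs)
      = peval h (c (arg pos xs)) (k # r # drop 1 xs)" for k r
    using PRec.IH(2)[of "Suc pos" "k # r # drop 1 xs"] p by simp
  ultimately show ?case by simp
qed (simp_all add: C)

lemma prim_rec_peval_oracle:
  assumes "prim_rec (\<lambda>xs. c (arg 0 xs) (arg 1 xs))"
  shows "prim_rec (\<lambda>xs. peval \<Phi> (c (arg 1 xs)) [arg 0 xs])"
proof -
  obtain C where C: "oracle_free C" "\<And>\<rho> ys. peval C \<rho> ys = c (arg 0 ys) (arg 1 ys)"
    using assms unfolding prim_rec_def by blast
  define p where "p = arity \<Phi>"
  define S where "S = PComp (subst_oracle \<Phi> C (Suc p)) ([PProj 0] @ replicate p PZero @ [PProj 1])"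
  have "peval S \<rho> xs = peval \<Phi> (c (arg 1 xs)) [arg 0 xs]" for \<rho> xs
  proof -
    let ?L = "[arg 0 xs] @ replicate p 0 @ [arg 1 xs]"
    have oracle_param: "arg (Suc p) ?L = arg 1 xs"
      by (simp add: arg_append)
    have "peval S \<rho> xs = peval (subst_oracle \<Phi> C (Suc p)) \<rho> ?L"
      by (simp add: S_def map_replicate_const)
    also have "\<dots> = peval \<Phi> (c (arg (Suc p) ?L)) ?L"
      by (rule peval_subst_oracle[OF C(2)]) (simp add: p_def)
    also have "\<dots> = peval \<Phi> (c (arg 1 xs)) ?L"
      by (simp only: oracle_param)
    also have "\<dots> = peval \<Phi> (c (arg 1 xs)) [arg 0 xs]"
      by (rule peval_cong_arity[of p]) (auto simp: p_def arg_def nth_append nth_Cons')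
    finally show ?thesis .
  qed
  moreover have "oracle_free S"
    using oracle_free_subst_oracle[OF C(1)] by (simp add: S_def list_all_iff)
  ultimately show ?thesis unfolding prim_rec_def by blast
qed

section \<open>Use bounds\<close>

definition oracle_bounded :: "(nat \<Rightarrow> nat) \<Rightarrow> bool" where
  "oracle_bounded \<rho> \<longleftrightarrow> (\<forall>j. \<rho> j \<le> 2 ^ j)"

text \<open>Only oracles bounded like names are considered: for unbounded oracles no such B exists, since an
  oracle answer, and with it the next query, could be arbitrarily large.\<close>

definition use_bound :: "prscheme \<Rightarrow> (nat \<Rightarrow> nat) \<Rightarrow> bool" where
  "use_bound S B \<longleftrightarrow> mono B \<and> (\<forall>s. s \<le> B s) \<and>
    (\<forall>\<rho> \<rho>' xs s. oracle_bounded \<rho> \<longrightarrow> oracle_bounded \<rho>' \<longrightarrow> (\<forall>x\<in>set xs. x \<le> s) \<longrightarrow>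
      (\<forall>j\<le>B s. \<rho> j = \<rho>' j) \<longrightarrow> peval S \<rho> xs = peval S \<rho>' xs \<and> peval S \<rho> xs \<le> B s)"

lemma use_boundD:
  assumes "use_bound S B" "oracle_bounded \<rho>" "oracle_bounded \<rho>'" "\<forall>x\<in>set xs. x \<le> s"
    "\<forall>j\<le>B s. \<rho> j = \<rho>' j"
  shows "peval S \<rho> xs = peval S \<rho>' xs" "peval S \<rho> xs \<le> B s"
  using assms unfolding use_bound_def by blast+

lemma use_bound_POracle: "use_bound POracle (\<lambda>s. 2 ^ s)"
  unfolding use_bound_def
proof (intro conjI allI impI)
  show "mono (\<lambda>s. (2::nat) ^ s)"
    by (simp add: mono_def power_increasing)
  fix \<rho> \<rho>' :: "nat \<Rightarrow> nat" and xs and s :: nat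
  assume bounded: "oracle_bounded \<rho>" and xs: "\<forall>x\<in>set xs. x \<le> s"
    and agree: "\<forall>j\<le>2 ^ s. \<rho> j = \<rho>' j"
  have "arg 0 xs \<le> s"
    using xs by (rule arg_le_bound)
  then have "arg 0 xs \<le> 2 ^ s"
    using less_exp[of s] by linarith
  then show "peval POracle \<rho> xs = peval POracle \<rho>' xs"
    using agree by (simp only: peval.simps)
  have "\<rho> (arg 0 xs) \<le> 2 ^ arg 0 xs"
    using bounded by (simp add: oracle_bounded_def)
  also have "\<dots> \<le> 2 ^ s"
    using \<open>arg 0 xs \<le> s\<close> by (simp add: power_increasing)
  finally show "peval POracle \<rho> xs \<le> 2 ^ s"
    by simp
qed (simp add: less_imp_le)

lemma use_bound_PComp:
  assumes f: "use_bound f Bf" and gs: "\<And>g. g \<in> set gs \<Longrightarrow> use_bound g (Bg g)"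
  shows "use_bound (PComp f gs) (\<lambda>s. Bf (s + (\<Sum>g\<leftarrow>gs. Bg g s)))"
proof -
  define Sg where "Sg s = (\<Sum>g\<leftarrow>gs. Bg g s)" for s
  have Bf: "mono Bf" "\<And>s. s \<le> Bf s"
    using f by (auto simp: use_bound_def)
  have "mono Sg"
    using gs unfolding Sg_def mono_def use_bound_def by (auto intro!: sum_list_mono)
  then have "mono (\<lambda>s. Bf (s + Sg s))"
    by (intro monoI monoD[OF Bf(1)] add_mono) (auto dest: monoD)
  moreover have "s \<le> Bf (s + Sg s)" for s
    using Bf(2)[of "s + Sg s"] by linarith
  moreover have "peval (PComp f gs) \<rho> xs = peval (PComp f gs) \<rho>' xs \<and>
      peval (PComp f gs) \<rho> xs \<le> Bf (s + Sg s)"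
    if bounded: "oracle_bounded \<rho>" "oracle_bounded \<rho>'" and xs: "\<forall>x\<in>set xs. x \<le> s"
      and agree: "\<forall>j\<le>Bf (s + Sg s). \<rho> j = \<rho>' j" for \<rho> \<rho>' xs s
  proof -
    have inner: "peval g \<rho> xs = peval g \<rho>' xs \<and> peval g \<rho> xs \<le> s + Sg s" if g: "g \<in> set gs" for g
    proof -
      have "Bg g s \<le> Sg s"
        unfolding Sg_def using g by (simp add: member_le_sum_list)
      moreover have "Bg g s \<le> Bf (s + Sg s)"
        using calculation Bf(2)[of "s + Sg s"] by linarith
      ultimately show ?thesis
        using use_boundD[OF gs[OF g] bounded xs] agree by fastforce
    qed
    then have "map (\<lambda>g. peval g \<rho> xs) gs = map (\<lambda>g. peval g \<rho>' xs) gs"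
      by (auto intro: map_cong)
    moreover have "\<forall>x\<in>set (map (\<lambda>g. peval g \<rho> xs) gs). x \<le> s + Sg s"
      using inner by (auto simp only: set_map)
    ultimately show ?thesis
      using use_boundD[OF f bounded _ agree] by (simp only: peval.simps)
  qed
  ultimately show ?thesis
    unfolding use_bound_def Sg_def[symmetric] by blast
qed

definition iterated_bound :: "(nat \<Rightarrow> nat) \<Rightarrow> (nat \<Rightarrow> nat) \<Rightarrow> nat \<Rightarrow> nat \<Rightarrow> nat" where
  "iterated_bound Bg Bh s k = rec_nat (Bg s) (\<lambda>k r. Bh (s + r)) k"

lemma iterated_bound_mono:
  assumes Bg: "mono Bg" and Bh: "mono Bh" "\<And>s. s \<le> Bh s"
  shows "k \<le> k' \<Longrightarrow> s \<le> s' \<Longrightarrow> iterated_bound Bg Bh s k \<le> iterated_bound Bg Bh s' k'"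
proof -
  have "iterated_bound Bg Bh s k \<le> iterated_bound Bg Bh s (Suc k)" for s k
    using Bh(2)[of "s + iterated_bound Bg Bh s k"] by (simp add: iterated_bound_def)
  then have "k \<le> k' \<Longrightarrow> iterated_bound Bg Bh s k \<le> iterated_bound Bg Bh s k'" for s k k'
    by (rule lift_Suc_mono_le)
  moreover have "s \<le> s' \<Longrightarrow> iterated_bound Bg Bh s k \<le> iterated_bound Bg Bh s' k" for s s' k
    by (induction k) (auto simp: iterated_bound_def intro!: monoD[OF Bg] monoD[OF Bh(1)])
  ultimately show "k \<le> k' \<Longrightarrow> s \<le> s' \<Longrightarrow> iterated_bound Bg Bh s k \<le> iterated_bound Bg Bh s' k'"
    using order_trans by blast
qed

lemma iterated_bound_ge:
  assumes "\<And>s. s \<le> Bh s"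
  shows "s \<le> iterated_bound Bg Bh s s"
proof -
  have "k \<le> iterated_bound Bg Bh s k" if "0 < s" for k
  proof (induction k)
    case (Suc k)
    then show ?case
      using that assms[of "s + iterated_bound Bg Bh s k"] by (simp add: iterated_bound_def)
  qed simp
  then show ?thesis
    by (cases s) auto
qed

lemma use_bound_PRec:
  assumes g: "use_bound g Bg" and h: "use_bound h Bh"
  shows "use_bound (PRec g h) (\<lambda>s. iterated_bound Bg Bh s s)"
proof -
  let ?R = "iterated_bound Bg Bh"
  have Bg: "mono Bg" and Bh: "mono Bh" "\<And>s. s \<le> Bh s"
    using g h by (auto simp: use_bound_def)
  note R_mono = iterated_bound_mono[OF Bg Bh]
  have R0: "?R s 0 = Bg s" and RSuc: "?R s (Suc k) = Bh (s + ?R s k)" for s k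
    by (simp_all add: iterated_bound_def)
  have "peval (PRec g h) \<rho> xs = peval (PRec g h) \<rho>' xs \<and> peval (PRec g h) \<rho> xs \<le> ?R s s"
    if bounded: "oracle_bounded \<rho>" "oracle_bounded \<rho>'" and xs: "\<forall>x\<in>set xs. x \<le> s"
      and agree: "\<forall>j\<le>?R s s. \<rho> j = \<rho>' j" for \<rho> \<rho>' xs s
  proof -
    define n where "n = arg 0 xs"
    have "n \<le> s"
      unfolding n_def using xs by (rule arg_le_bound)
    have xs1: "\<forall>x\<in>set (drop 1 xs). x \<le> s"
      using xs by (meson in_set_dropD)
    define v where "v \<psi> k = rec_nat (peval g \<psi> (drop 1 xs)) (\<lambda>n r. peval h \<psi> (n # r # drop 1 xs)) k"
      for \<psi> k
    have claim: "v \<rho> k = v \<rho>' k \<and> v \<rho> k \<le> ?R s k" if "k \<le> n" for k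
      using that
    proof (induction k)
      case 0
      have "\<forall>j\<le>Bg s. \<rho> j = \<rho>' j"
        using agree R_mono[of 0 s s s] by (auto simp: R0)
      from use_boundD[OF g bounded xs1 this] show ?case
        by (simp add: v_def R0)
    next
      case (Suc k)
      then have IH: "v \<rho> k = v \<rho>' k" "v \<rho> k \<le> ?R s k" by auto
      have args: "\<forall>x\<in>set (k # v \<rho> k # drop 1 xs). x \<le> s + ?R s k"
        using Suc.prems \<open>n \<le> s\<close> IH(2) xs1 by auto
      have "?R s (Suc k) \<le> ?R s s"
        using Suc.prems \<open>n \<le> s\<close> by (intro R_mono) simp_all
      then have "\<forall>j\<le>Bh (s + ?R s k). \<rho> j = \<rho>' j"
        using agree by (auto simp: RSuc)
      from use_boundD[OF h bounded args this] IH(1) show ?case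
        by (simp add: v_def RSuc)
    qed
    moreover have "?R s n \<le> ?R s s"
      using \<open>n \<le> s\<close> by (simp add: R_mono)
    moreover from claim[of n] have "v \<rho> n = v \<rho>' n" "v \<rho> n \<le> ?R s n"
      by simp_all
    ultimately have "v \<rho> n = v \<rho>' n" "v \<rho> n \<le> ?R s s"
      by linarith+
    moreover have "peval (PRec g h) \<psi> xs = v \<psi> n" for \<psi>
      by (simp add: v_def n_def)
    ultimately show ?thesis
      by simp
  qed
  moreover have "mono (\<lambda>s. ?R s s)"
    by (rule monoI) (simp add: R_mono)
  ultimately show ?thesis
    unfolding use_bound_def using iterated_bound_ge[OF Bh(2)] by blast
qed

lemma use_bound_exists: "\<exists>B. prim_rec (\<lambda>xs. B (arg 0 xs)) \<and> use_bound S B"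
proof (induction S)
  case PZero
  show ?case
    by (rule exI[of _ "\<lambda>s. s"]) (auto simp: use_bound_def mono_def intro: prim_rec_arg)
next
  case PSucc
  show ?case
    by (rule exI[of _ "\<lambda>s. Suc s"])
      (auto simp: use_bound_def mono_def arg_le_bound intro: prim_rec_Suc prim_rec_arg)
next
  case (PProj i)
  show ?case
    by (rule exI[of _ "\<lambda>s. s"]) (auto simp: use_bound_def mono_def arg_le_bound intro: prim_rec_arg)
next
  case POracle
  show ?case
    by (intro exI[of _ "\<lambda>s. 2 ^ s"] conjI use_bound_POracle prim_rec_intros)
next
  case (PComp f gs)
  obtain Bf where Bf: "prim_rec (\<lambda>xs. Bf (arg 0 xs))" "use_bound f Bf"
    using PComp.IH(1) by blast
  obtain Bg where Bg: "\<And>g. g \<in> set gs \<Longrightarrow> prim_rec (\<lambda>xs. Bg g (arg 0 xs)) \<and> use_bound g (Bg g)"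
    using PComp.IH(2) by metis
  have "prim_rec (\<lambda>xs. \<Sum>g\<leftarrow>gs'. Bg g (arg 0 xs))" if "set gs' \<subseteq> set gs" for gs'
    using that Bg by (induction gs') (auto intro: prim_rec_const prim_rec_add)
  then have "prim_rec (\<lambda>xs. Bf (arg 0 xs + (\<Sum>g\<leftarrow>gs. Bg g (arg 0 xs))))"
    by (intro prim_rec_comp1[OF Bf(1)] prim_rec_intros) simp
  moreover have "use_bound (PComp f gs) (\<lambda>s. Bf (s + (\<Sum>g\<leftarrow>gs. Bg g s)))"
    using Bg by (intro use_bound_PComp[OF Bf(2)]) blast
  ultimately show ?case
    by (intro exI[of _ "\<lambda>s. Bf (s + (\<Sum>g\<leftarrow>gs. Bg g s))"] conjI)
next
  case (PRec g h)
  obtain Bg Bh where Bg: "prim_rec (\<lambda>xs. Bg (arg 0 xs))" "use_bound g Bg"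
    and Bh: "prim_rec (\<lambda>xs. Bh (arg 0 xs))" "use_bound h Bh"
    using PRec.IH by blast
  have "prim_rec (\<lambda>xs. rec_nat (Bg (arg 0 xs)) (\<lambda>k r. Bh (arg 0 xs + r)) (arg 0 xs))"
    by (rule prim_rec_recursion[where F = "\<lambda>m p q. rec_nat (Bg p) (\<lambda>k r. Bh (p + r)) m"
          and g = "\<lambda>p q. Bg p" and h = "\<lambda>k r p q. Bh (p + r)" and Q = "\<lambda>xs. 0"])
      (simp_all add: Bg(1) prim_rec_comp1[OF Bh(1)] prim_rec_intros)
  moreover have "use_bound (PRec g h) (\<lambda>s. iterated_bound Bg Bh s s)"
    using Bg(2) Bh(2) by (rule use_bound_PRec)
  ultimately show ?case
    by (intro exI[of _ "\<lambda>s. iterated_bound Bg Bh s s"] conjI) (simp_all add: iterated_bound_def)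
qed

lemma fast_cauchy_real:
  "fast_cauchy r \<longleftrightarrow> (\<forall>i. \<bar>real_of_rat (r i) - real_of_rat (r (Suc i))\<bar> < 1 / 2 ^ i)"
proof -
  have of_rat_abs: "real_of_rat \<bar>q\<bar> = \<bar>real_of_rat q\<bar>" for q
    by (simp add: abs_if of_rat_minus)
  have "\<bar>a - b\<bar> < 1 / 2 ^ i \<longleftrightarrow> \<bar>real_of_rat a - real_of_rat b\<bar> < (1::real) / 2 ^ i"
    for a b :: rat and i
    using of_rat_less[of "\<bar>a - b\<bar>" "1 / 2 ^ i", where 'a = real]
    by (simp add: of_rat_abs of_rat_diff of_rat_divide of_rat_power)
  then show ?thesis
    unfolding fast_cauchy_def by blast
qed

lemma fast_cauchy_dist_limit:
  assumes "fast_cauchy r" and "(\<lambda>n. real_of_rat (r n)) \<longlonglongrightarrow> L"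
  shows "\<bar>real_of_rat (r n) - L\<bar> \<le> 2 / 2 ^ n"
proof -
  let ?q = "\<lambda>n. real_of_rat (r n)"
  have step: "\<bar>?q i - ?q (Suc i)\<bar> < 1 / 2 ^ i" for i
    using assms(1) unfolding fast_cauchy_real by blast
  have "\<bar>?q n - ?q (n + k)\<bar> \<le> 2 / 2 ^ n - 2 / 2 ^ (n + k)" for k
  proof (induction k)
    case (Suc k)
    have "\<bar>?q n - ?q (n + Suc k)\<bar> \<le> \<bar>?q n - ?q (n + k)\<bar> + \<bar>?q (n + k) - ?q (Suc (n + k))\<bar>"
      by simp
    also have "\<dots> \<le> 2 / 2 ^ n - 2 / 2 ^ (n + k) + 1 / 2 ^ (n + k)"
      using Suc step[of "n + k"] by linarith
    also have "\<dots> = 2 / 2 ^ n - 2 / 2 ^ (n + Suc k)"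
      by (simp add: field_simps)
    finally show ?case .
  qed simp
  then have "\<bar>?q n - ?q (n + k)\<bar> \<le> 2 / 2 ^ n" for k
    by (smt (verit) divide_nonneg_nonneg zero_le_power)
  moreover have "(\<lambda>k. \<bar>?q n - ?q (n + k)\<bar>) \<longlonglongrightarrow> \<bar>?q n - L\<bar>"
    using LIMSEQ_ignore_initial_segment[OF assms(2), of n]
    by (intro tendsto_intros) (simp add: add.commute)
  ultimately show ?thesis
    by (intro LIMSEQ_le_const2) auto
qed

lemma is_name_one_sided:
  fixes \<rho> :: "nat \<Rightarrow> nat"
  assumes "\<And>j. \<rho> j \<le> 2 ^ j"
    and "(\<forall>j. x - 1 / 2 ^ j < \<rho> j / 2 ^ j \<and> \<rho> j / 2 ^ j \<le> x) \<or>
         (\<forall>j. x \<le> \<rho> j / 2 ^ j \<and> \<rho> j / 2 ^ j < x + 1 / 2 ^ j)"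
  shows "is_name \<rho> x"
proof -
  define t where "t j = real (\<rho> j) / 2 ^ j" for j
  have halve: "(1::real) / 2 ^ Suc j \<le> 1 / 2 ^ j" for j
    by (simp add: field_simps)
  have close: "\<bar>t j - x\<bar> \<le> (1 / 2) ^ j" and step: "\<bar>t j - t (Suc j)\<bar> < 1 / 2 ^ j" for j
    using assms(2) halve[of j] unfolding t_def power_one_over abs_le_iff abs_less_iff
    by (smt (verit))+
  have "(\<lambda>j. t j - x) \<longlonglongrightarrow> 0"
    by (rule Lim_null_comparison[where g = "\<lambda>j. (1 / 2 :: real) ^ j"])
      (use close in \<open>auto intro: LIMSEQ_power_zero\<close>)
  then have "t \<longlonglongrightarrow> x"
    using LIM_zero_iff by blast
  with assms(1) step show ?thesis
    unfolding is_name_def fast_cauchy_real t_def by (simp add: of_rat_divide of_rat_power of_rat_mult)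
qed

definition floor_name :: "real \<Rightarrow> nat \<Rightarrow> nat" where
  "floor_name x j = nat \<lfloor>x * 2 ^ j\<rfloor>"

definition ceiling_name :: "real \<Rightarrow> nat \<Rightarrow> nat" where
  "ceiling_name x j = nat \<lceil>x * 2 ^ j\<rceil>"

lemma oracle_bounded_floor_name: "x \<in> {0..1} \<Longrightarrow> oracle_bounded (floor_name x)"
  unfolding oracle_bounded_def floor_name_def nat_le_iff
  by (intro allI order_trans[OF floor_le_ceiling] ceiling_le) (simp add: mult_le_cancel_right1)

lemma oracle_bounded_ceiling_name: "x \<in> {0..1} \<Longrightarrow> oracle_bounded (ceiling_name x)"
  unfolding oracle_bounded_def ceiling_name_def nat_le_iff
  by (intro allI ceiling_le) (simp add: mult_le_cancel_right1)

lemma is_name_floor_name: "x \<in> {0..1} \<Longrightarrow> is_name (floor_name x) x"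
proof (rule is_name_one_sided)
  assume x: "x \<in> {0..1}"
  then show "floor_name x j \<le> 2 ^ j" for j
    using oracle_bounded_floor_name by (simp add: oracle_bounded_def)
  have "x - 1 / 2 ^ j < floor_name x j / 2 ^ j \<and> floor_name x j / 2 ^ j \<le> x" for j
  proof -
    have "real (floor_name x j) = of_int \<lfloor>x * 2 ^ j\<rfloor>"
      using x by (simp add: floor_name_def)
    moreover have "x * 2 ^ j - 1 < of_int \<lfloor>x * 2 ^ j\<rfloor>" "of_int \<lfloor>x * 2 ^ j\<rfloor> \<le> x * 2 ^ j"
      by linarith+
    ultimately show ?thesis
      by (simp add: pos_less_divide_eq pos_divide_le_eq left_diff_distrib)
  qed
  then show "(\<forall>j. x - 1 / 2 ^ j < floor_name x j / 2 ^ j \<and> floor_name x j / 2 ^ j \<le> x) \<or>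
      (\<forall>j. x \<le> floor_name x j / 2 ^ j \<and> floor_name x j / 2 ^ j < x + 1 / 2 ^ j)"
    by blast
qed

lemma is_name_ceiling_name: "x \<in> {0..1} \<Longrightarrow> is_name (ceiling_name x) x"
proof (rule is_name_one_sided)
  assume x: "x \<in> {0..1}"
  then show "ceiling_name x j \<le> 2 ^ j" for j
    using oracle_bounded_ceiling_name by (simp add: oracle_bounded_def)
  have "x \<le> ceiling_name x j / 2 ^ j \<and> ceiling_name x j / 2 ^ j < x + 1 / 2 ^ j" for j
  proof -
    have "real (ceiling_name x j) = of_int \<lceil>x * 2 ^ j\<rceil>"
      using x by (simp add: ceiling_name_def)
    moreover have "x * 2 ^ j \<le> of_int \<lceil>x * 2 ^ j\<rceil>" "of_int \<lceil>x * 2 ^ j\<rceil> < x * 2 ^ j + 1"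
      by linarith+
    ultimately show ?thesis
      by (simp add: pos_le_divide_eq pos_divide_less_eq distrib_right)
  qed
  then show "(\<forall>j. x - 1 / 2 ^ j < ceiling_name x j / 2 ^ j \<and> ceiling_name x j / 2 ^ j \<le> x) \<or>
      (\<forall>j. x \<le> ceiling_name x j / 2 ^ j \<and> ceiling_name x j / 2 ^ j < x + 1 / 2 ^ j)"
    by blast
qed

lemma floor_mult_power2_eq:
  fixes a b :: real
  assumes "\<lfloor>a * 2 ^ M\<rfloor> = \<lfloor>b * 2 ^ M\<rfloor>" "j \<le> M"
  shows "\<lfloor>a * 2 ^ j\<rfloor> = \<lfloor>b * 2 ^ j\<rfloor>"
proof -
  have "\<lfloor>y * 2 ^ j\<rfloor> = \<lfloor>y * 2 ^ M\<rfloor> div 2 ^ (M - j)" for y :: real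
  proof -
    have "(2::real) ^ M = 2 ^ j * 2 ^ (M - j)"
      using assms(2) by (simp flip: power_add)
    then have "y * 2 ^ j = (y * 2 ^ M) / real_of_int (2 ^ (M - j))"
      by simp
    then show ?thesis
      by (simp only:) (rule floor_divide_real_eq_div; simp)
  qed
  then show ?thesis
    using assms(1) by simp
qed

lemma ceiling_mult_power2_eq:
  fixes a b :: real
  assumes "\<lceil>a * 2 ^ M\<rceil> = \<lceil>b * 2 ^ M\<rceil>" "j \<le> M"
  shows "\<lceil>a * 2 ^ j\<rceil> = \<lceil>b * 2 ^ j\<rceil>"
  using floor_mult_power2_eq[of "-a" M "-b" j] assms by (simp add: ceiling_def)

section \<open>A primitive recursive modulus of continuity\<close>

definition share_rounding :: "real \<Rightarrow> real \<Rightarrow> bool" where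
  "share_rounding A B \<longleftrightarrow> \<lfloor>A\<rfloor> = \<lfloor>B\<rfloor> \<or> \<lceil>A\<rceil> = \<lceil>B\<rceil>"

lemma share_rounding_intermediate:
  assumes "A \<le> B" "B \<le> A + 1"
  obtains C where "A \<le> C" "C \<le> B" "share_rounding A C" "share_rounding C B"
proof (cases "share_rounding A B")
  case True
  then show ?thesis
    using that[of A] assms by (simp add: share_rounding_def)
next
  case False
  have "\<lfloor>A\<rfloor> \<le> \<lfloor>B\<rfloor>"
    using assms(1) by (rule floor_mono)
  moreover have "\<lfloor>B\<rfloor> \<le> \<lfloor>A\<rfloor> + 1"
    using floor_mono[OF assms(2)] by simp
  ultimately have floor_B: "\<lfloor>B\<rfloor> = \<lfloor>A\<rfloor> + 1"
    using False by (simp add: share_rounding_def)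
  show ?thesis
  proof (cases "A \<in> \<int>")
    case True
    then obtain k where A: "A = of_int k"
      by (auto elim: Ints_cases)
    have "of_int \<lfloor>B\<rfloor> \<le> B"
      by (rule of_int_floor_le)
    with floor_B assms(2) have B: "B = of_int k + 1"
      unfolding A by (simp; linarith)
    have "\<lfloor>of_int k + 1 / 2 :: real\<rfloor> = k" "\<lceil>of_int k + 1 / 2 :: real\<rceil> = k + 1"
      by (simp_all add: floor_eq_iff ceiling_eq_iff)
    then show ?thesis
      by (intro that[of "of_int k + 1 / 2"]) (auto simp: share_rounding_def A B)
  next
    case False
    then have "A \<noteq> of_int \<lfloor>A\<rfloor>"
      by (metis Ints_of_int)
    then have "\<lceil>A\<rceil> = \<lfloor>A\<rfloor> + 1"
      by (simp add: ceiling_altdef)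
    then show ?thesis
      using floor_B of_int_floor_le[of B] by (intro that[of "\<lfloor>B\<rfloor>"]) (auto simp: share_rounding_def)
  qed
qed

definition realizes :: "prscheme \<Rightarrow> (real \<Rightarrow> real) \<Rightarrow> bool" where
  "realizes \<Phi> f \<longleftrightarrow> (\<forall>x\<in>{0..1}. \<forall>\<psi>. is_name \<psi> x \<longrightarrow>
      fast_cauchy (\<lambda>n. decode_rat (peval \<Phi> \<psi> [n]))
      \<and> (\<lambda>n. real_of_rat (decode_rat (peval \<Phi> \<psi> [n]))) \<longlonglongrightarrow> f x)"

lemma realizes_dist:
  assumes "realizes \<Phi> f" "x \<in> {0..1}" "is_name \<psi> x"
  shows "\<bar>real_of_rat (decode_rat (peval \<Phi> \<psi> [n])) - f x\<bar> \<le> 2 / 2 ^ n"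
  using assms by (intro fast_cauchy_dist_limit) (auto simp: realizes_def)

lemma realizes_share_rounding:
  assumes \<Phi>: "realizes \<Phi> f" "use_bound \<Phi> B" and ab: "a \<in> {0..1}" "b \<in> {0..1}"
    and "share_rounding (a * 2 ^ B n) (b * 2 ^ B n)"
  shows "\<bar>f a - f b\<bar> \<le> 4 / 2 ^ n"
proof -
  obtain \<psi> \<psi>' where names: "is_name \<psi> a" "is_name \<psi>' b" "oracle_bounded \<psi>" "oracle_bounded \<psi>'"
    and agree: "\<forall>j\<le>B n. \<psi> j = \<psi>' j"
  proof (cases "\<lfloor>a * 2 ^ B n\<rfloor> = \<lfloor>b * 2 ^ B n\<rfloor>")
    case True
    then show ?thesis
      using ab floor_mult_power2_eq[OF True]
      by (intro that[of "floor_name a" "floor_name b"])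
        (auto simp: is_name_floor_name oracle_bounded_floor_name floor_name_def)
  next
    case False
    then have ceiling_eq: "\<lceil>a * 2 ^ B n\<rceil> = \<lceil>b * 2 ^ B n\<rceil>"
      using assms(5) by (simp add: share_rounding_def)
    show ?thesis
      using ab ceiling_mult_power2_eq[OF ceiling_eq]
      by (intro that[of "ceiling_name a" "ceiling_name b"])
        (auto simp: is_name_ceiling_name oracle_bounded_ceiling_name ceiling_name_def)
  qed
  have "peval \<Phi> \<psi> [n] = peval \<Phi> \<psi>' [n]"
    using use_boundD(1)[OF \<Phi>(2) names(3,4) _ agree] by simp
  moreover have "\<bar>real_of_rat (decode_rat (peval \<Phi> \<psi> [n])) - f a\<bar> \<le> 2 / 2 ^ n"
    "\<bar>real_of_rat (decode_rat (peval \<Phi> \<psi>' [n])) - f b\<bar> \<le> 2 / 2 ^ n"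
    using realizes_dist[OF \<Phi>(1)] ab names by blast+
  moreover have "(4::real) / 2 ^ n = 2 / 2 ^ n + 2 / 2 ^ n"
    by simp
  ultimately show ?thesis
    by simp
qed

lemma realizes_modulus:
  assumes \<Phi>: "realizes \<Phi> f" "use_bound \<Phi> B" and ab: "a \<in> {0..1}" "b \<in> {0..1}"
    and close: "\<bar>a - b\<bar> \<le> 1 / 2 ^ B n"
  shows "\<bar>f a - f b\<bar> \<le> 8 / 2 ^ n"
proof -
  have ordered: "\<bar>f a - f b\<bar> \<le> 8 / 2 ^ n" if ab: "a \<in> {0..1}" "b \<in> {0..1}" "a \<le> b" "b - a \<le> 1 / 2 ^ B n"
    for a b
  proof -
    have "a * 2 ^ B n \<le> b * 2 ^ B n" "b * 2 ^ B n \<le> a * 2 ^ B n + 1"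
      using ab by (simp_all add: field_simps)
    then obtain C where C: "a * 2 ^ B n \<le> C" "C \<le> b * 2 ^ B n"
      "share_rounding (a * 2 ^ B n) C" "share_rounding C (b * 2 ^ B n)"
      by (rule share_rounding_intermediate)
    define c where "c = C / 2 ^ B n"
    have "C = c * 2 ^ B n"
      by (simp add: c_def)
    with C ab have "c \<in> {0..1}" "share_rounding (a * 2 ^ B n) (c * 2 ^ B n)"
      "share_rounding (c * 2 ^ B n) (b * 2 ^ B n)"
      by auto
    with ab realizes_share_rounding[OF \<Phi>] have "\<bar>f a - f c\<bar> \<le> 4 / 2 ^ n" "\<bar>f c - f b\<bar> \<le> 4 / 2 ^ n"
      by blast+
    moreover have "(8::real) / 2 ^ n = 4 / 2 ^ n + 4 / 2 ^ n"
      by simp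
    ultimately show ?thesis
      by linarith
  qed
  from ordered[of a b] ordered[of b a] ab close show ?thesis
    by (cases "a \<le> b") (auto simp: abs_minus_commute)
qed

section \<open>Bernstein approximation\<close>

lemma modulus_chain:
  fixes f :: "real \<Rightarrow> real"
  assumes modulus: "\<And>a b. a \<in> {0..1} \<Longrightarrow> b \<in> {0..1} \<Longrightarrow> \<bar>a - b\<bar> \<le> \<delta> \<Longrightarrow> \<bar>f a - f b\<bar> \<le> E"
    and "0 < \<delta>" "0 \<le> E"
  shows "a \<in> {0..1} \<Longrightarrow> b \<in> {0..1} \<Longrightarrow> \<bar>a - b\<bar> \<le> real (Suc L) * \<delta> \<Longrightarrow> \<bar>f a - f b\<bar> \<le> real (Suc L) * E"
proof (induction L arbitrary: a)
  case 0
  then show ?case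
    using modulus by simp
next
  case (Suc L)
  show ?case
  proof (cases "\<bar>a - b\<bar> \<le> real (Suc L) * \<delta>")
    case True
    then have "\<bar>f a - f b\<bar> \<le> real (Suc L) * E"
      using Suc by blast
    also have "\<dots> \<le> real (Suc (Suc L)) * E"
      using assms(3) by (intro mult_right_mono) auto
    finally show ?thesis .
  next
    case False
    define c where "c = (if a \<le> b then a + \<delta> else a - \<delta>)"
    have "\<delta> \<le> real (Suc L) * \<delta>"
      using assms(2) by simp
    then have "\<delta> < \<bar>a - b\<bar>"
      using False by linarith
    then have "c \<in> {0..1}" "\<bar>a - c\<bar> \<le> \<delta>" "\<bar>c - b\<bar> \<le> real (Suc L) * \<delta>"
      using Suc.prems assms(2) unfolding c_def by (auto simp: algebra_simps)
    then have "\<bar>f a - f c\<bar> \<le> E" "\<bar>f c - f b\<bar> \<le> real (Suc L) * E"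
      using modulus Suc.prems Suc.IH by blast+
    then show ?thesis
      by (simp add: algebra_simps)
  qed
qed

text \<open>A quadratic bound replaces the usual appeal to the sup norm of f in the proof of
  Weierstrass' theorem via Bernstein polynomials: the degree then depends only on the modulus.\<close>

lemma quadratic_modulus:
  fixes f :: "real \<Rightarrow> real"
  assumes modulus: "\<And>a b. a \<in> {0..1} \<Longrightarrow> b \<in> {0..1} \<Longrightarrow> \<bar>a - b\<bar> \<le> \<delta> \<Longrightarrow> \<bar>f a - f b\<bar> \<le> E"
    and "0 < \<delta>" "0 \<le> E" and ab: "a \<in> {0..1}" "b \<in> {0..1}"
  shows "\<bar>f a - f b\<bar> \<le> E * (1 + (a - b)\<^sup>2 / \<delta>\<^sup>2)"
proof -
  define t where "t = \<bar>a - b\<bar> / \<delta>"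
  have t2: "t\<^sup>2 = (a - b)\<^sup>2 / \<delta>\<^sup>2"
    unfolding t_def by (simp add: power_divide)
  show ?thesis
  proof (cases "t \<le> 1")
    case True
    then have "\<bar>f a - f b\<bar> \<le> E"
      using modulus ab assms(2) by (simp add: t_def divide_le_eq)
    also have "\<dots> \<le> E * (1 + (a - b)\<^sup>2 / \<delta>\<^sup>2)"
      using assms(3) by (simp add: mult_le_cancel_left1)
    finally show ?thesis .
  next
    case False
    define L where "L = nat \<lceil>t\<rceil> - 1"
    have SL: "real (Suc L) = of_int \<lceil>t\<rceil>"
      using False by (simp add: L_def of_nat_diff)
    have "\<bar>a - b\<bar> = t * \<delta>"
      unfolding t_def using assms(2) by simp
    also have "\<dots> \<le> real (Suc L) * \<delta>"
      unfolding SL using assms(2) by (intro mult_right_mono) auto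
    finally have "\<bar>a - b\<bar> \<le> real (Suc L) * \<delta>" .
    then have "\<bar>f a - f b\<bar> \<le> real (Suc L) * E"
      using modulus_chain[where f = f and \<delta> = \<delta> and E = E, OF modulus assms(2,3) ab] by blast
    also have "\<dots> \<le> (1 + t\<^sup>2) * E"
    proof (rule mult_right_mono[OF _ assms(3)])
      have "of_int \<lceil>t\<rceil> < t + 1" "t \<le> t\<^sup>2"
        using False by (linarith, simp add: power2_eq_square)
      then show "real (Suc L) \<le> 1 + t\<^sup>2"
        unfolding SL by linarith
    qed
    finally show ?thesis
      unfolding t2 by (simp add: mult.commute)
  qed
qed

lemma sum_sq_dist_Bernstein:
  assumes "1 \<le> N"
  shows "(\<Sum>k\<le>N. (real k / real N - x)\<^sup>2 * Bernstein N k x) = x * (1 - x) / real N"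
proof -
  have "(real k / real N - x)\<^sup>2 * B = (1 / real N ^ 2) * (real k * (real k - 1) * B)
      + (1 / real N ^ 2 - 2 * x / real N) * (real k * B) + x\<^sup>2 * B" for k and B :: real
    using assms by (simp add: field_simps power2_eq_square)
  then have "(\<Sum>k\<le>N. (real k / real N - x)\<^sup>2 * Bernstein N k x) =
      (1 / real N ^ 2) * (\<Sum>k\<le>N. real k * (real k - 1) * Bernstein N k x) +
      (1 / real N ^ 2 - 2 * x / real N) * (\<Sum>k\<le>N. real k * Bernstein N k x) +
      x\<^sup>2 * (\<Sum>k\<le>N. Bernstein N k x)"
    by (simp only: sum.distrib sum_distrib_left)
  also have "\<dots> = x * (1 - x) / real N"
    unfolding sum_kk_Bernstein sum_k_Bernstein sum_Bernstein
    using assms by (simp add: field_simps power2_eq_square)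
  finally show ?thesis .
qed

lemma Bernstein_approx_quadratic_modulus:
  fixes f :: "real \<Rightarrow> real"
  assumes modulus: "\<And>a b. a \<in> {0..1} \<Longrightarrow> b \<in> {0..1} \<Longrightarrow> \<bar>f a - f b\<bar> \<le> E * (1 + (a - b)\<^sup>2 * K)"
    and "0 \<le> E" "0 \<le> K" "K \<le> real N" "1 \<le> N" and x: "x \<in> {0..1}"
  shows "\<bar>(\<Sum>k\<le>N. f (real k / real N) * Bernstein N k x) - f x\<bar> \<le> 2 * E"
proof -
  have Bernstein_nonneg': "0 \<le> Bernstein N k x" for k
    using x by (simp add: Bernstein_nonneg)
  have "\<bar>(\<Sum>k\<le>N. f (real k / real N) * Bernstein N k x) - f x\<bar> = \<bar>\<Sum>k\<le>N. (f (real k / real N) - f x) * Bernstein N k x\<bar>"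
    using sum_Bernstein[of N x] by (simp add: left_diff_distrib sum_subtractf flip: sum_distrib_left)
  also have "\<dots> \<le> (\<Sum>k\<le>N. E * (1 + (real k / real N - x)\<^sup>2 * K) * Bernstein N k x)"
  proof (rule order_trans[OF sum_abs sum_mono])
    fix k assume "k \<in> {..N}"
    then have "\<bar>f (real k / real N) - f x\<bar> \<le> E * (1 + (real k / real N - x)\<^sup>2 * K)"
      using modulus x \<open>1 \<le> N\<close> by simp
    then show "\<bar>(f (real k / real N) - f x) * Bernstein N k x\<bar> \<le> E * (1 + (real k / real N - x)\<^sup>2 * K) * Bernstein N k x"
      using Bernstein_nonneg'[of k] by (simp add: abs_mult mult_right_mono)
  qed
  also have "\<dots> = (\<Sum>k\<le>N. E * Bernstein N k x + E * K * ((real k / real N - x)\<^sup>2 * Bernstein N k x))"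
    by (simp add: algebra_simps)
  also have "\<dots> = E * (\<Sum>k\<le>N. Bernstein N k x)
      + E * K * (\<Sum>k\<le>N. (real k / real N - x)\<^sup>2 * Bernstein N k x)"
    by (simp only: sum.distrib sum_distrib_left)
  also have "\<dots> = E + E * (K / real N * (x * (1 - x)))"
    unfolding sum_Bernstein sum_sq_dist_Bernstein[OF \<open>1 \<le> N\<close>] by simp
  also have "\<dots> \<le> E + E * 1"
    using x assms(2-5) by (intro add_left_mono mult_left_mono mult_le_one) auto
  finally show ?thesis
    by simp
qed

lemma Bernstein_approx_samples:
  fixes f :: "real \<Rightarrow> real"
  assumes modulus: "\<And>a b. a \<in> {0..1} \<Longrightarrow> b \<in> {0..1} \<Longrightarrow> \<bar>a - b\<bar> \<le> \<delta> \<Longrightarrow> \<bar>f a - f b\<bar> \<le> E"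
    and "0 < \<delta>" "0 \<le> E" "1 / \<delta>\<^sup>2 \<le> real N"
    and samples: "\<And>k. k \<le> N \<Longrightarrow> \<bar>q k - f (real k / real N)\<bar> \<le> e"
    and x: "x \<in> {0..1}"
  shows "\<bar>(\<Sum>k\<le>N. q k * Bernstein N k x) - f x\<bar> \<le> e + 2 * E"
proof -
  have "0 < 1 / \<delta>\<^sup>2"
    using assms(2) by simp
  then have "0 < real N"
    using assms(4) by linarith
  then have "1 \<le> N"
    by simp
  have "\<bar>(\<Sum>k\<le>N. q k * Bernstein N k x) - (\<Sum>k\<le>N. f (real k / real N) * Bernstein N k x)\<bar>
      \<le> (\<Sum>k\<le>N. \<bar>q k - f (real k / real N)\<bar> * Bernstein N k x)"
    using x by (simp add: Bernstein_nonneg abs_mult flip: sum_subtractf left_diff_distrib)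
      (rule order_trans[OF sum_abs], simp add: abs_mult Bernstein_nonneg)
  also have "\<dots> \<le> (\<Sum>k\<le>N. e * Bernstein N k x)"
    using x samples by (intro sum_mono mult_right_mono) (auto simp: Bernstein_nonneg)
  also have "\<dots> = e"
    by (subst sum_distrib_left[symmetric]) simp
  finally have "\<bar>(\<Sum>k\<le>N. q k * Bernstein N k x) - (\<Sum>k\<le>N. f (real k / real N) * Bernstein N k x)\<bar> \<le> e" .
  moreover have "\<bar>f a - f b\<bar> \<le> E * (1 + (a - b)\<^sup>2 * (1 / \<delta>\<^sup>2))"
    if "a \<in> {0..1}" "b \<in> {0..1}" for a b
    using quadratic_modulus[where f = f and \<delta> = \<delta> and E = E, OF modulus assms(2,3) that] by simp
  then have "\<bar>(\<Sum>k\<le>N. f (real k / real N) * Bernstein N k x) - f x\<bar> \<le> 2 * E"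
    using assms(3,4) x \<open>1 \<le> N\<close> by (intro Bernstein_approx_quadratic_modulus) auto
  ultimately show ?thesis
    by linarith
qed

section \<open>Coding dyadic polynomials\<close>

definition dyadic_code :: "nat \<Rightarrow> int \<Rightarrow> nat" where
  "dyadic_code n z = prod_encode (int_encode z, 2 ^ n - 1)"

lemma decode_rat_dyadic_code: "real_of_rat (decode_rat (dyadic_code n z)) = of_int z / 2 ^ n"
proof -
  have "int (2 ^ n - 1) + 1 = (2::int) ^ n"
    by (simp add: of_nat_diff)
  then show ?thesis
    by (simp add: dyadic_code_def decode_rat_def Fract_of_int_quotient of_rat_divide of_rat_power)
qed

lemma prim_rec_dyadic_code_diff:
  assumes "prim_rec N" "prim_rec P" "prim_rec M"
  shows "prim_rec (\<lambda>xs. dyadic_code (N xs) (int (P xs) - int (M xs)))"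
proof -
  have "int_encode (int p - int m) = (if m \<le> p then 2 * (p - m) else 2 * (m - p - 1) + 1)" for p m
    by (auto simp: int_encode_def sum_encode_def nat_diff_distrib)
  then show ?thesis
    unfolding dyadic_code_def by simp (intro prim_rec_intros assms)
qed

text \<open>Rounding to denominator 2^n, with the signed numerator given as a difference of two naturals
  so that it is computable by natural-valued primitive recursive functions.\<close>

definition dyadic_round_pos :: "nat \<Rightarrow> nat \<Rightarrow> nat" where
  "dyadic_round_pos n v = (if even (fst (prod_decode v))
     then fst (prod_decode v) div 2 * 2 ^ n div (snd (prod_decode v) + 1) else 0)"

definition dyadic_round_neg :: "nat \<Rightarrow> nat \<Rightarrow> nat" where
  "dyadic_round_neg n v = (if even (fst (prod_decode v)) then 0
     else (fst (prod_decode v) div 2 + 1) * 2 ^ n div (snd (prod_decode v) + 1))"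

lemma prim_rec_dyadic_round [prim_rec_intros]:
  "prim_rec N \<Longrightarrow> prim_rec V \<Longrightarrow> prim_rec (\<lambda>xs. dyadic_round_pos (N xs) (V xs))"
  "prim_rec N \<Longrightarrow> prim_rec V \<Longrightarrow> prim_rec (\<lambda>xs. dyadic_round_neg (N xs) (V xs))"
  unfolding dyadic_round_pos_def dyadic_round_neg_def by (intro prim_rec_intros; assumption)+

lemma floor_div_dyadic_dist:
  fixes m d :: nat
  assumes "0 < d"
  shows "0 \<le> real m / d - real (m * 2 ^ n div d) / 2 ^ n"
    and "real m / d - real (m * 2 ^ n div d) / 2 ^ n < 1 / 2 ^ n"
proof -
  have "real (m * 2 ^ n) / real d = real m / d * 2 ^ n"
    by simp
  moreover have "\<lfloor>real (m * 2 ^ n) / real d\<rfloor> = int (m * 2 ^ n div d)"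
    by (rule floor_divide_of_nat_eq)
  ultimately have "\<lfloor>real m / d * 2 ^ n\<rfloor> = int (m * 2 ^ n div d)"
    by simp
  then have "real (m * 2 ^ n div d) \<le> real m / d * 2 ^ n"
    and "real m / d * 2 ^ n < real (m * 2 ^ n div d) + 1"
    by linarith+
  then have "real (m * 2 ^ n div d) / 2 ^ n \<le> real m / d"
    and "real m / d < (real (m * 2 ^ n div d) + 1) / 2 ^ n"
    by (simp_all add: pos_divide_le_eq pos_less_divide_eq)
  then show "0 \<le> real m / d - real (m * 2 ^ n div d) / 2 ^ n"
    and "real m / d - real (m * 2 ^ n div d) / 2 ^ n < 1 / 2 ^ n"
    by (simp_all add: add_divide_distrib)
qed

lemma dyadic_round_dist:
  "\<bar>real_of_rat (decode_rat v) - (real (dyadic_round_pos n v) - real (dyadic_round_neg n v)) / 2 ^ n\<bar>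
    < 1 / 2 ^ n"
proof -
  obtain a b where v: "prod_decode v = (a, b)"
    by fastforce
  have decoded: "real_of_rat (decode_rat v) = of_int (int_decode a) / real (b + 1)"
    by (simp add: decode_rat_def v Fract_of_int_quotient of_rat_divide of_rat_add)
  show ?thesis
  proof (cases "even a")
    case True
    then have "real_of_rat (decode_rat v) = real (a div 2) / real (b + 1)"
      by (simp add: decoded int_decode_def sum_decode_def)
    moreover have "dyadic_round_pos n v = a div 2 * 2 ^ n div (b + 1)" "dyadic_round_neg n v = 0"
      using True by (simp_all add: dyadic_round_pos_def dyadic_round_neg_def v)
    ultimately show ?thesis
      using floor_div_dyadic_dist[of "b + 1" "a div 2" n] by (simp only: abs_less_iff) simp
  next
    case False
    then have "real_of_rat (decode_rat v) = - (real (a div 2 + 1) / real (b + 1))"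
      by (simp add: decoded int_decode_def sum_decode_def minus_divide_left)
    moreover have "dyadic_round_pos n v = 0" "dyadic_round_neg n v = (a div 2 + 1) * 2 ^ n div (b + 1)"
      using False by (simp_all add: dyadic_round_pos_def dyadic_round_neg_def v)
    ultimately show ?thesis
      using floor_div_dyadic_dist[of "b + 1" "a div 2 + 1" n] by (simp only: abs_less_iff) simp
  qed
qed

lemma rec_nat_list_encode:
  "t \<le> L \<Longrightarrow> rec_nat 0 (\<lambda>t r. Suc (prod_encode (c (L - Suc t), r))) t = list_encode (map c [L - t..<L])"
proof (induction t)
  case (Suc t)
  then have "[L - Suc t..<L] = (L - Suc t) # [L - t..<L]"
    by (simp add: upt_conv_Cons Suc_diff_Suc)
  with Suc show ?case
    by simp
qed simp

lemma prim_rec_list_encode_map: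
  assumes "prim_rec (\<lambda>xs. c (arg 0 xs) (arg 1 xs))" "prim_rec P" "prim_rec L"
  shows "prim_rec (\<lambda>xs. list_encode (map (c (P xs)) [0..<L xs]))"
proof -
  have "prim_rec (\<lambda>xs. rec_nat 0 (\<lambda>t r. Suc (prod_encode (c (P xs) (L xs - Suc t), r))) (L xs))"
    by (rule prim_rec_recursion[where F = "\<lambda>m p q. rec_nat 0 (\<lambda>t r. Suc (prod_encode (c p (q - Suc t), r))) m"
          and g = "\<lambda>p q. 0" and h = "\<lambda>t r p q. Suc (prod_encode (c p (q - Suc t), r))"])
      (intro prim_rec_intros prim_rec_comp2[OF assms(1)] assms(2,3) | simp)+
  then show ?thesis
    using rec_nat_list_encode[of _ _ "c _"] by simp
qed

lemma poly_Poly_eq_sum: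
  fixes cs :: "real list"
  shows "poly (Poly cs) x = (\<Sum>j<length cs. cs ! j * x ^ j)"
proof (induction cs)
  case (Cons a cs)
  have "(\<Sum>j<length (a # cs). (a # cs) ! j * x ^ j) = a + (\<Sum>j<length cs. cs ! j * x ^ Suc j)"
    unfolding length_Cons sum.lessThan_Suc_shift by simp
  also have "\<dots> = a + x * (\<Sum>j<length cs. cs ! j * x ^ j)"
    by (simp add: sum_distrib_left algebra_simps)
  finally show ?case
    using Cons by simp
qed simp

lemma Bernstein_monomial_expansion:
  assumes "k \<le> N"
  shows "x ^ k * (1 - x) ^ (N - k) =
    (\<Sum>j\<le>N. if k \<le> j then real ((N - k) choose (j - k)) * (-1) ^ (j - k) * x ^ j else 0)"
proof -
  have "(1 - x) ^ (N - k) = (\<Sum>t\<le>N - k. real ((N - k) choose t) * (-x) ^ t * 1 ^ (N - k - t))"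
    using binomial_ring[of "-x" 1 "N - k"] by simp
  then have "x ^ k * (1 - x) ^ (N - k) =
      (\<Sum>t\<le>N - k. x ^ k * (real ((N - k) choose t) * (-x) ^ t * 1 ^ (N - k - t)))"
    by (simp only: sum_distrib_left)
  also have "\<dots> = (\<Sum>t\<le>N - k. real ((N - k) choose t) * (-1) ^ t * x ^ (t + k))"
    by (intro sum.cong refl) (simp add: power_minus[of x] power_add mult.commute mult.left_commute)
  also have "\<dots> = (\<Sum>j\<in>{0 + k..(N - k) + k}. real ((N - k) choose (j - k)) * (-1) ^ (j - k) * x ^ j)"
    by (subst sum.shift_bounds_cl_nat_ivl) (simp add: atLeast0AtMost)
  also have "{0 + k..(N - k) + k} = {j \<in> {..N}. k \<le> j}"
    using assms by auto
  also have "(\<Sum>j\<in>{j \<in> {..N}. k \<le> j}. real ((N - k) choose (j - k)) * (-1) ^ (j - k) * x ^ j) =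
      (\<Sum>j\<le>N. if k \<le> j then real ((N - k) choose (j - k)) * (-1) ^ (j - k) * x ^ j else 0)"
    by (rule sum.inter_filter) simp
  finally show ?thesis .
qed

definition bernstein_monomial_coeff :: "(nat \<Rightarrow> real) \<Rightarrow> nat \<Rightarrow> nat \<Rightarrow> real" where
  "bernstein_monomial_coeff q N j =
     (\<Sum>k\<le>j. q k * real (N choose k) * real ((N - k) choose (j - k)) * (-1) ^ (j - k))"

lemma sum_Bernstein_monomials:
  "(\<Sum>k\<le>N. q k * Bernstein N k x) = (\<Sum>j\<le>N. bernstein_monomial_coeff q N j * x ^ j)"
proof -
  let ?t = "\<lambda>k j. q k * real (N choose k) * real ((N - k) choose (j - k)) * (-1) ^ (j - k) * x ^ j"
  have "(\<Sum>k\<le>N. q k * Bernstein N k x) = (\<Sum>k\<le>N. \<Sum>j\<le>N. if k \<le> j then ?t k j else 0)"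
  proof (intro sum.cong refl)
    fix k assume "k \<in> {..N}"
    then have "k \<le> N"
      by simp
    have "q k * Bernstein N k x = q k * real (N choose k) * (x ^ k * (1 - x) ^ (N - k))"
      by (simp add: Bernstein_def)
    also have "\<dots> = (\<Sum>j\<le>N. q k * real (N choose k) *
        (if k \<le> j then real ((N - k) choose (j - k)) * (-1) ^ (j - k) * x ^ j else 0))"
      by (simp only: Bernstein_monomial_expansion[OF \<open>k \<le> N\<close>] sum_distrib_left)
    also have "\<dots> = (\<Sum>j\<le>N. if k \<le> j then ?t k j else 0)"
      by (intro sum.cong refl) simp
    finally show "q k * Bernstein N k x = (\<Sum>j\<le>N. if k \<le> j then ?t k j else 0)" .
  qed
  also have "\<dots> = (\<Sum>j\<le>N. \<Sum>k\<le>N. if k \<le> j then ?t k j else 0)"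
    by (rule sum.swap)
  also have "\<dots> = (\<Sum>j\<le>N. bernstein_monomial_coeff q N j * x ^ j)"
  proof (intro sum.cong refl)
    fix j assume "j \<in> {..N}"
    then have "{k \<in> {..N}. k \<le> j} = {..j}"
      by auto
    then show "(\<Sum>k\<le>N. if k \<le> j then ?t k j else 0) = bernstein_monomial_coeff q N j * x ^ j"
      by (simp add: sum.inter_filter[symmetric] bernstein_monomial_coeff_def sum_distrib_right)
  qed
  finally show ?thesis .
qed

text \<open>The monomial coefficients of the Bernstein combination with integer weights zp k - zm k, split
  into a positive and a negative natural part (the second obtained by swapping zp and zm).\<close>

definition bernstein_coeff_num :: "nat \<Rightarrow> (nat \<Rightarrow> nat) \<Rightarrow> (nat \<Rightarrow> nat) \<Rightarrow> nat \<Rightarrow> nat" where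
  "bernstein_coeff_num N zp zm j =
     (\<Sum>k<Suc j. (if even (j - k) then zp k else zm k) * (N choose k) * ((N - k) choose (j - k)))"

lemma bernstein_coeff_num_diff:
  "(real (bernstein_coeff_num N zp zm j) - real (bernstein_coeff_num N zm zp j)) / c
    = bernstein_monomial_coeff (\<lambda>k. (real (zp k) - real (zm k)) / c) N j"
  unfolding bernstein_coeff_num_def bernstein_monomial_coeff_def lessThan_Suc_atMost
  by (simp add: sum_divide_distrib flip: sum_subtractf) (intro sum.cong refl, simp add: algebra_simps)

definition bernstein_code :: "nat \<Rightarrow> nat \<Rightarrow> (nat \<Rightarrow> nat) \<Rightarrow> (nat \<Rightarrow> nat) \<Rightarrow> nat" where
  "bernstein_code n N zp zm = list_encode (map (\<lambda>j. dyadic_code n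
     (int (bernstein_coeff_num N zp zm j) - int (bernstein_coeff_num N zm zp j))) [0..<Suc N])"

lemma poly_decode_bernstein_code:
  "poly (decode_poly (bernstein_code n N zp zm)) x
    = (\<Sum>k\<le>N. (real (zp k) - real (zm k)) / 2 ^ n * Bernstein N k x)"
proof -
  have "poly (decode_poly (bernstein_code n N zp zm)) x
      = (\<Sum>j<Suc N. bernstein_monomial_coeff (\<lambda>k. (real (zp k) - real (zm k)) / 2 ^ n) N j * x ^ j)"
    by (simp add: decode_poly_def bernstein_code_def poly_Poly_eq_sum decode_rat_dyadic_code
        bernstein_coeff_num_diff del: upt_Suc)
  also have "\<dots> = (\<Sum>k\<le>N. (real (zp k) - real (zm k)) / 2 ^ n * Bernstein N k x)"
    by (simp only: lessThan_Suc_atMost sum_Bernstein_monomials)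
  finally show ?thesis .
qed

lemma prim_rec_bernstein_code:
  assumes n: "prim_rec (\<lambda>xs. n (arg 0 xs))" and N: "prim_rec (\<lambda>xs. N (arg 0 xs))"
    and zp: "prim_rec (\<lambda>xs. zp (arg 0 xs) (arg 1 xs))" and zm: "prim_rec (\<lambda>xs. zm (arg 0 xs) (arg 1 xs))"
  shows "prim_rec (\<lambda>xs. bernstein_code (n (arg 0 xs)) (N (arg 0 xs)) (zp (arg 0 xs)) (zm (arg 0 xs)))"
proof -
  have coeff: "prim_rec (\<lambda>xs. bernstein_coeff_num (N (arg 0 xs)) (Z (arg 0 xs)) (Z' (arg 0 xs)) (arg 1 xs))"
    if Z: "prim_rec (\<lambda>xs. Z (arg 0 xs) (arg 1 xs))" and Z': "prim_rec (\<lambda>xs. Z' (arg 0 xs) (arg 1 xs))"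
    for Z Z' :: "nat \<Rightarrow> nat \<Rightarrow> nat"
    unfolding bernstein_coeff_num_def
    by (rule prim_rec_sum[where t = "\<lambda>k j i. (if even (j - k) then Z i k else Z' i k)
          * (N i choose k) * ((N i - k) choose (j - k))"])
      (intro prim_rec_intros prim_rec_comp1[OF N] prim_rec_comp2[OF Z] prim_rec_comp2[OF Z'])+
  have "prim_rec (\<lambda>xs. dyadic_code (n (arg 0 xs))
      (int (bernstein_coeff_num (N (arg 0 xs)) (zp (arg 0 xs)) (zm (arg 0 xs)) (arg 1 xs))
        - int (bernstein_coeff_num (N (arg 0 xs)) (zm (arg 0 xs)) (zp (arg 0 xs)) (arg 1 xs))))"
    by (intro prim_rec_dyadic_code_diff n coeff zp zm)
  then show ?thesis
    unfolding bernstein_code_def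
    by (rule prim_rec_list_encode_map) (intro prim_rec_intros N)+
qed

section \<open>Approximating a realized function\<close>

definition grid_sample :: "prscheme \<Rightarrow> nat \<Rightarrow> nat \<Rightarrow> nat \<Rightarrow> nat" where
  "grid_sample \<Phi> n N k = peval \<Phi> (\<lambda>j. k * 2 ^ j div N) [n]"

lemma floor_name_grid: "floor_name (real k / real N) = (\<lambda>j. k * 2 ^ j div N)"
proof
  fix j
  have "real k / real N * 2 ^ j = real (k * 2 ^ j) / real N"
    by simp
  then show "floor_name (real k / real N) j = k * 2 ^ j div N"
    unfolding floor_name_def by (simp only: floor_divide_of_nat_eq)
qed

lemma prim_rec_grid_sample:
  assumes "prim_rec A" "prim_rec B" "prim_rec C"
  shows "prim_rec (\<lambda>xs. grid_sample \<Phi> (A xs) (B xs) (C xs))"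
proof -
  have "prim_rec (\<lambda>xs. peval \<Phi> ((\<lambda>p j. fst (prod_decode p) * 2 ^ j div snd (prod_decode p)) (arg 1 xs))
      [arg 0 xs])"
    by (rule prim_rec_peval_oracle) (intro prim_rec_intros)
  from prim_rec_comp2[OF this assms(1) prim_rec_prod_encode[OF assms(3,2)]] show ?thesis
    by (simp add: grid_sample_def)
qed

text \<open>The degree 4^(B n) is the 1/\<delta>^2 required by the Bernstein estimate for the modulus
  \<delta> = 2^-(B n) of a realized function.\<close>

definition approx_poly_code :: "prscheme \<Rightarrow> (nat \<Rightarrow> nat) \<Rightarrow> nat \<Rightarrow> nat" where
  "approx_poly_code \<Phi> B n = bernstein_code n (4 ^ B n)
     (\<lambda>k. dyadic_round_pos n (grid_sample \<Phi> n (4 ^ B n) k))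
     (\<lambda>k. dyadic_round_neg n (grid_sample \<Phi> n (4 ^ B n) k))"

lemma prim_rec_approx_poly_code:
  assumes "prim_rec (\<lambda>xs. B (arg 0 xs))"
  shows "prim_rec (\<lambda>xs. approx_poly_code \<Phi> B (arg 0 xs))"
  unfolding approx_poly_code_def
  by (rule prim_rec_bernstein_code)
    (intro prim_rec_intros prim_rec_grid_sample prim_rec_comp1[OF assms])+

lemma approx_poly_code_dist:
  assumes \<Phi>: "realizes \<Phi> f" "use_bound \<Phi> B" and x: "x \<in> {0..1}"
  shows "\<bar>poly (decode_poly (approx_poly_code \<Phi> B n)) x - f x\<bar> \<le> 19 / 2 ^ n"
proof -
  define N :: nat where "N = 4 ^ B n"
  define q where "q k = (real (dyadic_round_pos n (grid_sample \<Phi> n N k))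
      - real (dyadic_round_neg n (grid_sample \<Phi> n N k))) / 2 ^ n" for k
  have samples: "\<bar>q k - f (real k / real N)\<bar> \<le> 3 / 2 ^ n" if "k \<le> N" for k
  proof -
    have "real k / real N \<in> {0..1}"
      using that by (simp add: N_def)
    from realizes_dist[OF \<Phi>(1) this is_name_floor_name[OF this]]
    have "\<bar>real_of_rat (decode_rat (grid_sample \<Phi> n N k)) - f (real k / real N)\<bar> \<le> 2 / 2 ^ n"
      by (simp add: grid_sample_def floor_name_grid)
    moreover have "\<bar>real_of_rat (decode_rat (grid_sample \<Phi> n N k)) - q k\<bar> < 1 / 2 ^ n"
      unfolding q_def by (rule dyadic_round_dist)
    moreover have "(3::real) / 2 ^ n = 1 / 2 ^ n + 2 / 2 ^ n"
      by simp
    ultimately show ?thesis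
      by linarith
  qed
  have "(2::real) ^ B n * 2 ^ B n = 4 ^ B n"
    by (simp flip: power_mult_distrib)
  then have "1 / (1 / 2 ^ B n)\<^sup>2 \<le> real N"
    by (simp add: N_def power2_eq_square)
  then have "\<bar>(\<Sum>k\<le>N. q k * Bernstein N k x) - f x\<bar> \<le> 3 / 2 ^ n + 2 * (8 / 2 ^ n)"
    using realizes_modulus[OF \<Phi>] samples x by (intro Bernstein_approx_samples) auto
  then show ?thesis
    by (simp add: approx_poly_code_def poly_decode_bernstein_code q_def N_def)
qed

theorem mainTheorem7:
  fixes f :: "real \<Rightarrow> real"
  assumes "punctually_computable f"
  shows "uniformly_punctually_computable f"
proof -
  obtain \<Phi> where \<Phi>: "realizes \<Phi> f"
    using assms unfolding punctually_computable_def realizes_def by blast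
  obtain B where B: "prim_rec (\<lambda>xs. B (arg 0 xs))" "use_bound \<Phi> B"
    using use_bound_exists by blast
  have "prim_rec (\<lambda>xs. approx_poly_code \<Phi> B (arg 0 xs + 5))"
    by (rule prim_rec_comp1[OF prim_rec_approx_poly_code[OF B(1)]]) (intro prim_rec_intros)
  then obtain S where S: "oracle_free S" "\<And>\<rho> xs. peval S \<rho> xs = approx_poly_code \<Phi> B (arg 0 xs + 5)"
    unfolding prim_rec_def by blast
  have dist: "\<bar>f x - poly (decode_poly (peval S (\<lambda>_. 0) [i])) x\<bar> \<le> 19 / 2 ^ (i + 5)"
    if "x \<in> {0..1}" for i x
    using approx_poly_code_dist[OF \<Phi> B(2) that] by (simp add: S abs_minus_commute)
  moreover have "19 / 2 ^ (i + 5) < (1::real) / 2 ^ i" for i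
    by (simp add: power_add divide_simps)
  ultimately show ?thesis
    unfolding uniformly_punctually_computable_def
    by (intro exI[of _ S] conjI allI S(1) bdd_aboveI2[OF dist] le_less_trans[OF cSUP_least])
      auto
qed

end
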